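(* Let $r\ge 1$ and $p_1,\dots,p_r\ge 1$, and let $(\mathbb{Z}_t)_{t\in\mathbb{Z}}$ be a tensor-valued time series with $\mathbb{Z}_t\in\mathbb{R}^{p_1\times\cdots\times p_r}$ (with finite fourth moments, so that all expectations below exist). Suppose the observed series is $$\mathbb{X}_t=\mathbb{Z}_t\odot_1\boldsymbol{\Omega}_1\odot_2\boldsymbol{\Omega}_2\cdots\odot_r\boldsymbol{\Omega}_r,\qquad t=0,\pm1,\pm2,\dots,$$ where each $\boldsymbol{\Omega}_m\in\mathbb{R}^{p_m\times p_m}$ is non-singular, and that for all $t$: $\mathrm{E}[\mathrm{vec}(\mathbb{Z}_t)]=\mathbf{0}$ and $\mathrm{Cov}[\mathrm{vec}(\mathbb{Z}_t)]=\mathbf{I}$. Let $\mathcal{T}$ be a fixed set of lags. Let $\mathbb{X}^{st}_t:=\mathbb{X}_t\odot_1(\boldsymbol{\Sigma}^1_0(\mathbb{X}_t))^{-1/2}\cdots\odot_r(\boldsymbol{\Sigma}^r_0(\mathbb{X}_t))^{-1/2}$ be the standardized series, and let $c>0$ and orthogonal matrices $\mathbf{U}_m\in\mathbb{R}^{p_m\times p_m}$, $m=1,\dots,r$, be such that $\mathbb{X}^{st}_t=c\,\mathbb{Z}_t\odot_1\mathbf{U}_1\cdots\odot_r\mathbf{U}_r$ for all $t$ (such $c$ and $\mathbf{U}_m$ exist under the stated assumptions). Assume additionally one of the following: (i) for all $m=1,\dots,r$ and $\tau\in\mathcal{T}$, the matrix $\boldsymbol{\Sigma}^m_\tau(\mathbb{Z}_t)$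 is diagonal; (ii) for all $m=1,\dots,r$ and $\tau\in\mathcal{T}$, the matrix $\mathbf{B}^m_\tau(\mathbb{Z}_t)$ is diagonal; (iii) for all $m=1,\dots,r$, $i,j=1,\dots,p_m$ and $\tau\in\mathcal{T}$, the matrix $\mathbf{C}^m_{\tau ij}(\mathbb{Z}_t)$ is diagonal. Then for each fixed mode $m=1,\dots,r$, the matrix $\mathbf{U}_m^T$ diagonalizes (i.e. $\mathbf{U}_m^T\mathbf{M}\mathbf{U}_m$ is diagonal), respectively: in case (i) the matrices $\boldsymbol{\Sigma}^m_\tau(\mathbb{X}^{st}_t)$, $\tau\in\mathcal{T}$; in case (ii) the matrices $\mathbf{B}^m_\tau(\mathbb{X}^{st}_t)$, $\tau\in\mathcal{T}$; in case (iii) the matrices $\mathbf{C}^m_{\tau ij}(\mathbb{X}^{st}_t)$, $\tau\in\mathcal{T}$, $i,j=1,\dots,p_m$.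
   Context: Tensor notation: for $\mathbb{X}\in\mathbb{R}^{p_1\times\cdots\times p_r}$, the $m$-mode vectors are obtained by fixing all indices except the $m$-th and letting the $m$-th vary; there are $\rho_m:=\prod_{i\ne m}p_i$ of them, each of length $p_m$. The $m$-flattening $\mathbf{X}^{(m)}\in\mathbb{R}^{p_m\times\rho_m}$ is the matrix obtained by stacking all $m$-mode vectors as columns in a fixed, consistent order. For $\mathbf{A}\in\mathbb{R}^{p_m\times p_m}$, $\mathbb{X}\odot_m\mathbf{A}$ is the tensor of the same size with entries $(\mathbb{X}\odot_m\mathbf{A})_{i_1\cdots i_r}=\sum_{j}x_{i_1\cdots i_{m-1}\,j\,i_{m+1}\cdots i_r}a_{i_m j}$, equivalently $(\mathbb{X}\odot_m\mathbf{A})^{(m)}=\mathbf{A}\mathbf{X}^{(m)}$; $\mathbb{X}\odot_1\mathbf{A}_1\cdots\odot_r\mathbf{A}_r$ means applying these successively. $\mathrm{vec}$ denotes vectorization. $\mathbf{e}_i$ is the $i$-th standard basis vector of $\mathbb{R}^{p_m}$, $\mathbf{E}^{ij}:=\mathbf{e}_i\mathbf{e}_j^T$, and $\mathbf{M}^{-1/2}$ denotes the unique symmetric positive definite inverse square root. For a tensor-valued series $\mathbb{X}_t$ with $m$-flattenings $\mathbf{X}^{(m)}_t$, define the $p_m\times p_m$ matrices $\boldsymbol{\Sigma}^m_\tau(\mathbb{X}_t):=\frac{1}{\rho_m}\mathrm{E}[\mathbf{X}^{(m)}_t(\mathbf{X}^{(m)}_{t+\tau})^T]$ (so $\boldsymbol{\Sigma}^m_0$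 is the $m$-mode covariance matrix), $\mathbf{B}^m_\tau(\mathbb{X}_t):=\frac{1}{\rho_m}\mathrm{E}[\mathbf{X}^{(m)}_t(\mathbf{X}^{(m)}_{t+\tau})^T\mathbf{X}^{(m)}_{t+\tau}(\mathbf{X}^{(m)}_t)^T]$, for lags $\tau_1,\tau_2,\tau_3,\tau_4$ and $i,j=1,\dots,p_m$: $\mathbf{B}^m_{\tau_1\tau_2\tau_3\tau_4 ij}(\mathbb{X}_t):=\frac{1}{\rho_m}\mathrm{E}\big[(\mathbf{e}_i^T\mathbf{X}^{(m)}_{t+\tau_1}(\mathbf{X}^{(m)}_{t+\tau_2})^T\mathbf{e}_j)\cdot\mathbf{X}^{(m)}_{t+\tau_3}(\mathbf{X}^{(m)}_{t+\tau_4})^T\big]$, and $\mathbf{C}^m_{\tau ij}(\mathbb{X}_t):=\mathbf{B}^m_{0\tau\tau0ij}(\mathbb{X}_t)+\mathbf{B}^m_{0\tau0\tau ij}(\mathbb{X}_t)-\mathbf{B}^m_{\tau\tau00ij}(\mathbb{X}_t)-\boldsymbol{\Sigma}^m_0(\mathbb{X}_t)(\mathbf{E}^{ij}+\mathbf{E}^{ji}+\mathbf{I})\boldsymbol{\Sigma}^m_0(\mathbb{X}_t)^T$. *)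

theory Defs
  imports "HOL-Probability.Probability" "Jordan_Normal_Form.Matrix"
begin

text \<open>Tensors of shape ps = [p_1,...,p_r] are functions from index lists to reals;
  indices are 0-based, modes are 0-based (mode m of the paper is m-1 here).\<close>

type_synonym tensor = "nat list \<Rightarrow> real"

definition tidx :: "nat list \<Rightarrow> nat list set" where
  "tidx ps = {is. length is = length ps \<and> (\<forall>k<length ps. is ! k < ps ! k)}"

definition other_dims :: "nat list \<Rightarrow> nat \<Rightarrow> nat list" where
  "other_dims ps m = take m ps @ drop (Suc m) ps"

definition rho :: "nat list \<Rightarrow> nat \<Rightarrow> nat" where
  "rho ps m = prod_list (other_dims ps m)"

text \<open>Mixed-radix decoding of a column number into the multi-index of the other modes
  (fixes the consistent column order of the flattening).\<close>
fun mr_decode :: "nat list \<Rightarrow> nat \<Rightarrow> nat list" where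
  "mr_decode [] k = []"
| "mr_decode (q # qs) k = (k mod q) # mr_decode qs (k div q)"

definition ins_at :: "nat \<Rightarrow> nat \<Rightarrow> nat list \<Rightarrow> nat list" where
  "ins_at m i c = take m c @ [i] @ drop m c"

definition flat :: "nat list \<Rightarrow> nat \<Rightarrow> tensor \<Rightarrow> real mat" where
  "flat ps m X = mat (ps ! m) (rho ps m)
      (\<lambda>(i, k). X (ins_at m i (mr_decode (other_dims ps m) k)))"

definition mode_prod :: "nat list \<Rightarrow> nat \<Rightarrow> tensor \<Rightarrow> real mat \<Rightarrow> tensor" where
  "mode_prod ps m X A = (\<lambda>is. \<Sum>j<ps ! m. X (is[m := j]) * A $$ (is ! m, j))"

definition mode_prods :: "nat list \<Rightarrow> (nat \<Rightarrow> real mat) \<Rightarrow> tensor \<Rightarrow> tensor" where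
  "mode_prods ps As X = foldl (\<lambda>Y m. mode_prod ps m Y (As m)) X [0..<length ps]"

definition mat_expect :: "'a measure \<Rightarrow> nat \<Rightarrow> nat \<Rightarrow> ('a \<Rightarrow> real mat) \<Rightarrow> real mat" where
  "mat_expect M n k F = mat n k (\<lambda>(i, j). integral\<^sup>L M (\<lambda>\<omega>. F \<omega> $$ (i, j)))"

definition Sigma_m :: "'a measure \<Rightarrow> nat list \<Rightarrow> nat \<Rightarrow> (int \<Rightarrow> 'a \<Rightarrow> tensor) \<Rightarrow> int \<Rightarrow> int \<Rightarrow> real mat" where
  "Sigma_m M ps m X t \<tau> = (1 / real (rho ps m)) \<cdot>\<^sub>m
     mat_expect M (ps ! m) (ps ! m)
       (\<lambda>\<omega>. flat ps m (X t \<omega>) * transpose_mat (flat ps m (X (t + \<tau>) \<omega>)))"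

definition B_m :: "'a measure \<Rightarrow> nat list \<Rightarrow> nat \<Rightarrow> (int \<Rightarrow> 'a \<Rightarrow> tensor) \<Rightarrow> int \<Rightarrow> int \<Rightarrow> real mat" where
  "B_m M ps m X t \<tau> = (1 / real (rho ps m)) \<cdot>\<^sub>m
     mat_expect M (ps ! m) (ps ! m)
       (\<lambda>\<omega>. flat ps m (X t \<omega>) * transpose_mat (flat ps m (X (t + \<tau>) \<omega>))
             * flat ps m (X (t + \<tau>) \<omega>) * transpose_mat (flat ps m (X t \<omega>)))"

text \<open>B^m_{tau1 tau2 tau3 tau4 ij}(X_t); note e_i^T A e_j = A_{ij}.\<close>
definition B4_m :: "'a measure \<Rightarrow> nat list \<Rightarrow> nat \<Rightarrow> (int \<Rightarrow> 'a \<Rightarrow> tensor) \<Rightarrow> int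
    \<Rightarrow> int \<Rightarrow> int \<Rightarrow> int \<Rightarrow> int \<Rightarrow> nat \<Rightarrow> nat \<Rightarrow> real mat" where
  "B4_m M ps m X t \<tau>1 \<tau>2 \<tau>3 \<tau>4 i j = (1 / real (rho ps m)) \<cdot>\<^sub>m
     mat_expect M (ps ! m) (ps ! m)
       (\<lambda>\<omega>. ((flat ps m (X (t + \<tau>1) \<omega>) * transpose_mat (flat ps m (X (t + \<tau>2) \<omega>))) $$ (i, j))
             \<cdot>\<^sub>m (flat ps m (X (t + \<tau>3) \<omega>) * transpose_mat (flat ps m (X (t + \<tau>4) \<omega>))))"

definition Eij :: "nat \<Rightarrow> nat \<Rightarrow> nat \<Rightarrow> real mat" where
  "Eij n i j = mat n n (\<lambda>(a, b). if a = i \<and> b = j then 1 else 0)"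

definition C_m :: "'a measure \<Rightarrow> nat list \<Rightarrow> nat \<Rightarrow> (int \<Rightarrow> 'a \<Rightarrow> tensor) \<Rightarrow> int \<Rightarrow> int
    \<Rightarrow> nat \<Rightarrow> nat \<Rightarrow> real mat" where
  "C_m M ps m X t \<tau> i j =
     B4_m M ps m X t 0 \<tau> \<tau> 0 i j + B4_m M ps m X t 0 \<tau> 0 \<tau> i j - B4_m M ps m X t \<tau> \<tau> 0 0 i j
     - Sigma_m M ps m X t 0 * (Eij (ps ! m) i j + Eij (ps ! m) j i + 1\<^sub>m (ps ! m))
         * transpose_mat (Sigma_m M ps m X t 0)"

definition pos_def_mat :: "real mat \<Rightarrow> bool" where
  "pos_def_mat S \<longleftrightarrow> (\<exists>n. S \<in> carrier_mat n n \<and> transpose_mat S = S \<and>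
     (\<forall>v \<in> carrier_vec n. v \<noteq> 0\<^sub>v n \<longrightarrow> v \<bullet> (S *\<^sub>v v) > 0))"

definition inv_sqrt_mat :: "real mat \<Rightarrow> real mat" where
  "inv_sqrt_mat A = (THE S. S \<in> carrier_mat (dim_row A) (dim_row A) \<and> pos_def_mat S
      \<and> S * S * A = 1\<^sub>m (dim_row A))"

end

theory Submission
  imports Defs "Jordan_Normal_Form.Determinant"
begin

text \<open>In a mode-\<open>m\<close> Gram matrix \<open>flat\<^sub>m X \<cdot> (flat\<^sub>m Y)\<^sup>T\<close> the rotations of the other
  modes cancel by orthogonality, while \<open>U\<^sub>m\<close> acts by conjugation; so each such Gram matrix
  of the standardized series is \<open>c\<^sup>2 U\<^sub>m G U\<^sub>m\<^sup>T\<close> for the corresponding Gram matrix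
  \<open>G\<close> of \<open>Z\<close>. Expectation commutes with the conjugation, hence \<open>U\<^sub>m\<^sup>T \<Sigma> U\<^sub>m\<close>
  and \<open>U\<^sub>m\<^sup>T B U\<^sub>m\<close> are multiples of the corresponding matrices of \<open>Z\<close>. For
  \<open>C\<^sub>i\<^sub>j\<close> the rotation also mixes the indices: off the diagonal,
  \<open>U\<^sub>m\<^sup>T C\<^sub>i\<^sub>j U\<^sub>m\<close> is the combination \<open>\<Sum>\<^sub>k\<^sub>l U\<^sub>i\<^sub>k U\<^sub>j\<^sub>l C\<^sub>k\<^sub>l\<close> of the
  matrices of \<open>Z\<close>, because \<open>\<Sigma>\<^sub>0(Z) = I\<close> makes the correction term of \<open>C\<close>
  transform like the fourth moments.\<close>

section \<open>Multi-indices\<close>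

lemma tidx_Cons: "tidx (q # qs) = (\<lambda>(x, xs). x # xs) ` ({..<q} \<times> tidx qs)"
proof (rule Set.set_eqI, rule iffI)
  fix l assume "l \<in> tidx (q # qs)"
  then obtain x xs where "l = x # xs" "x < q" "xs \<in> tidx qs"
    unfolding tidx_def by (cases l) (force, fastforce)
  then show "l \<in> (\<lambda>(x, xs). x # xs) ` ({..<q} \<times> tidx qs)" by force
next
  fix l assume "l \<in> (\<lambda>(x, xs). x # xs) ` ({..<q} \<times> tidx qs)"
  then show "l \<in> tidx (q # qs)" unfolding tidx_def
    by (auto simp: nth_Cons split: nat.splits)
qed

lemma tidx_length: "ix \<in> tidx ps \<Longrightarrow> length ix = length ps"
  unfolding tidx_def by auto

lemma tidx_update: "ix \<in> tidx ps \<Longrightarrow> x < ps ! n \<Longrightarrow> ix[n := x] \<in> tidx ps"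
  unfolding tidx_def by (auto simp: nth_list_update) (metis nth_list_update_eq nth_list_update_neq)

lemma bij_betw_mr_decode: "bij_betw (mr_decode qs) {..<prod_list qs} (tidx qs)"
proof (induction qs)
  case Nil
  then show ?case by (simp add: bij_betw_def lessThan_Suc tidx_def)
next
  case (Cons q qs)
  let ?P = "prod_list qs"
  have q_pos: "q > 0" if "k < q * ?P" for k
    using that by (cases q) auto
  have div_less: "k div q < ?P" if "k < q * ?P" for k
    using that q_pos[OF that] by (simp add: div_less_iff_less_mult mult.commute)
  have "inj_on (mr_decode (q # qs)) {..<q * ?P}"
  proof (rule inj_onI)
    fix k k' assume k: "k \<in> {..<q * ?P}" and k': "k' \<in> {..<q * ?P}"
      and eq: "mr_decode (q # qs) k = mr_decode (q # qs) k'"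
    then have "k div q = k' div q"
      using Cons.IH div_less unfolding bij_betw_def inj_on_def by auto
    moreover have "k mod q = k' mod q" using eq by simp
    ultimately show "k = k'" by (metis div_mult_mod_eq)
  qed
  moreover have "mr_decode (q # qs) ` {..<q * ?P} = tidx (q # qs)"
  proof (rule Set.set_eqI, rule iffI)
    fix l assume "l \<in> mr_decode (q # qs) ` {..<q * ?P}"
    then obtain k where k: "k < q * ?P" "l = mr_decode (q # qs) k" by auto
    then have "mr_decode qs (k div q) \<in> tidx qs"
      using Cons.IH div_less unfolding bij_betw_def by blast
    then show "l \<in> tidx (q # qs)" using k q_pos by (auto simp: tidx_Cons)
  next
    fix l assume "l \<in> tidx (q # qs)"
    then obtain x xs where l: "l = x # xs" "x < q" "xs \<in> tidx qs" by (auto simp: tidx_Cons)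
    then obtain k' where k': "k' < ?P" "xs = mr_decode qs k'"
      using Cons.IH unfolding bij_betw_def by (metis imageE lessThan_iff)
    have "x + q * k' < q * ?P"
    proof -
      have "q * (k' + 1) \<le> q * ?P" using k' by (intro mult_le_mono2) simp
      then show ?thesis using l(2) by (simp add: algebra_simps)
    qed
    moreover have "mr_decode (q # qs) (x + q * k') = l" using l k' by simp
    ultimately show "l \<in> mr_decode (q # qs) ` {..<q * ?P}" by (metis imageI lessThan_iff)
  qed
  ultimately show ?case unfolding bij_betw_def by simp
qed

lemma finite_tidx[simp]: "finite (tidx qs)"
  using bij_betw_mr_decode[of qs] by (metis bij_betw_finite finite_lessThan)

lemma sum_tidx_split:
  assumes n: "n < length ps"
  shows "(\<Sum>ix\<in>tidx ps. f ix) = (\<Sum>ix\<in>{ix\<in>tidx ps. ix ! n = 0}. \<Sum>x<ps ! n. f (ix[n := x]))"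
proof -
  let ?T0 = "{ix\<in>tidx ps. ix ! n = 0}"
  have bij: "bij_betw (\<lambda>(ix, x). ix[n := x]) (?T0 \<times> {..<ps ! n}) (tidx ps)"
  proof (rule bij_betw_byWitness[where f' = "\<lambda>ix. (ix[n := 0], ix ! n)"])
    show "\<forall>a\<in>?T0 \<times> {..<ps ! n}. (\<lambda>ix. (ix[n := 0], ix ! n)) ((\<lambda>(ix, x). ix[n := x]) a) = a"
      using n by (auto simp: tidx_length) (metis list_update_id)
    show "(\<lambda>ix. (ix[n := 0], ix ! n)) ` tidx ps \<subseteq> ?T0 \<times> {..<ps ! n}"
      using n by (auto intro!: tidx_update simp: tidx_length) (auto simp: tidx_def)
  qed (auto intro: tidx_update)
  have "(\<Sum>ix\<in>tidx ps. f ix) = (\<Sum>(ix, x)\<in>?T0 \<times> {..<ps ! n}. f (ix[n := x]))"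
    using sum.reindex_bij_betw[OF bij, of f] by (simp add: case_prod_unfold)
  then show ?thesis by (simp add: sum.cartesian_product)
qed

lemma bij_betw_ins_at:
  assumes m: "m < length ps" and i: "i < ps ! m"
  shows "bij_betw (ins_at m i) (tidx (other_dims ps m)) {ix\<in>tidx ps. ix ! m = i}"
proof (rule bij_betw_byWitness[where f' = "\<lambda>ix. take m ix @ drop (Suc m) ix"])
  have len: "length (other_dims ps m) = length ps - 1" using m by (simp add: other_dims_def)
  have od: "other_dims ps m ! k = (if k < m then ps ! k else ps ! Suc k)" if "k < length ps - 1" for k
    using m that by (auto simp: other_dims_def nth_append min_def)
  show "\<forall>a\<in>tidx (other_dims ps m). take m (ins_at m i a) @ drop (Suc m) (ins_at m i a) = a"
    using m len by (auto simp: ins_at_def tidx_length)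
  show "\<forall>a'\<in>{ix \<in> tidx ps. ix ! m = i}. ins_at m i (take m a' @ drop (Suc m) a') = a'"
    using m by (auto simp: ins_at_def tidx_length min_def Cons_nth_drop_Suc)
  show "ins_at m i ` tidx (other_dims ps m) \<subseteq> {ix \<in> tidx ps. ix ! m = i}"
  proof clarify
    fix c assume c: "c \<in> tidx (other_dims ps m)"
    have lc: "length c = length ps - 1" using c len by (simp add: tidx_length)
    have cb: "c ! k < other_dims ps m ! k" if "k < length ps - 1" for k
      using c len that unfolding tidx_def by auto
    have "ins_at m i c ! k < ps ! k" if k: "k < length ps" for k
    proof -
      consider "k < m" | "k = m" | "k > m" by linarith
      then show ?thesis
      proof cases
        case 1 then show ?thesis using lc m cb[of k] od[of k] by (simp add: ins_at_def nth_append)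
      next
        case 2 then show ?thesis using lc m i by (simp add: ins_at_def nth_append)
      next
        case 3
        then have "ins_at m i c ! k = c ! (k - 1)" using lc m by (simp add: ins_at_def nth_append)
        moreover have "k - 1 < length ps - 1" "\<not> k - 1 < m" "Suc (k - 1) = k" using 3 k by auto
        ultimately show ?thesis using cb[of "k - 1"] od[of "k - 1"] by simp
      qed
    qed
    moreover have "length (ins_at m i c) = length ps" "ins_at m i c ! m = i"
      using lc m by (simp_all add: ins_at_def nth_append)
    ultimately show "ins_at m i c \<in> tidx ps \<and> ins_at m i c ! m = i" by (auto simp: tidx_def)
  qed
  show "(\<lambda>ix. take m ix @ drop (Suc m) ix) ` {ix \<in> tidx ps. ix ! m = i} \<subseteq> tidx (other_dims ps m)"
    using m by (auto simp: tidx_def other_dims_def nth_append min_def)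
qed

lemma card_tidx_fibre:
  assumes m: "m < length ps" and i: "i < ps ! m"
  shows "card {ix\<in>tidx ps. ix ! m = i} = rho ps m"
  using bij_betw_same_card[OF bij_betw_ins_at[OF m i]] bij_betw_same_card[OF bij_betw_mr_decode]
  by (simp add: rho_def)

section \<open>Matrix identities\<close>

lemma index_mult_mat3:
  assumes "A \<in> carrier_mat n p" "F \<in> carrier_mat p q" "B \<in> carrier_mat q k" "a < n" "b < k"
  shows "(A * F * B) $$ (a, b) = (\<Sum>x<p. \<Sum>y<q. A $$ (a, x) * F $$ (x, y) * B $$ (y, b))"
proof -
  have "(A * F * B) $$ (a, b) = (\<Sum>x<p. A $$ (a, x) * (\<Sum>y<q. F $$ (x, y) * B $$ (y, b)))"
    using assms by (simp add: scalar_prod_def atLeast0LessThan)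
  then show ?thesis by (simp add: sum_distrib_left mult.assoc)
qed

lemma index_conj_transpose:
  fixes U :: "'a :: comm_semiring_0 mat"
  assumes "U \<in> carrier_mat p p" "G \<in> carrier_mat p p" "i < p" "j < p"
  shows "(U * G * transpose_mat U) $$ (i, j) = (\<Sum>k<p. \<Sum>l<p. U $$ (i, k) * U $$ (j, l) * G $$ (k, l))"
proof -
  have "(U * G * transpose_mat U) $$ (i, j)
      = (\<Sum>k<p. \<Sum>l<p. U $$ (i, k) * G $$ (k, l) * transpose_mat U $$ (l, j))"
    using assms by (intro index_mult_mat3) auto
  also have "\<dots> = (\<Sum>k<p. \<Sum>l<p. U $$ (i, k) * U $$ (j, l) * G $$ (k, l))"
    using assms by (intro sum.cong refl) (simp add: mult_ac)
  finally show ?thesis .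
qed

lemma orthogonal_columns_inner:
  assumes U: "U \<in> carrier_mat p p" "transpose_mat U * U = 1\<^sub>m p" and a: "a < p" and b: "b < p"
  shows "(\<Sum>x<p. U $$ (x, a) * U $$ (x, b)) = (if a = b then 1 else (0 :: real))"
proof -
  have "(transpose_mat U * U) $$ (a, b) = (\<Sum>x<p. U $$ (x, a) * U $$ (x, b))"
    using U(1) a b by (simp add: scalar_prod_def atLeast0LessThan)
  then show ?thesis using U a b by simp
qed

lemma orthogonal_inner_preserving:
  fixes f g :: "nat \<Rightarrow> real"
  assumes U: "U \<in> carrier_mat p p" "transpose_mat U * U = 1\<^sub>m p"
  shows "(\<Sum>x<p. (\<Sum>a<p. f a * U $$ (x, a)) * (\<Sum>b<p. g b * U $$ (x, b))) = (\<Sum>a<p. f a * g a)"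
proof -
  have "(\<Sum>x<p. (\<Sum>a<p. f a * U $$ (x, a)) * (\<Sum>b<p. g b * U $$ (x, b)))
      = (\<Sum>x<p. \<Sum>a<p. \<Sum>b<p. f a * g b * (U $$ (x, a) * U $$ (x, b)))"
    by (simp add: sum_product mult_ac)
  also have "\<dots> = (\<Sum>a<p. \<Sum>b<p. \<Sum>x<p. f a * g b * (U $$ (x, a) * U $$ (x, b)))"
    by (subst sum.swap) (rule sum.cong[OF refl], rule sum.swap)
  also have "\<dots> = (\<Sum>a<p. \<Sum>b<p. f a * g b * (if a = b then 1 else 0))"
    using orthogonal_columns_inner[OF U] by (simp add: sum_distrib_left[symmetric])
  finally show ?thesis by (simp add: if_distrib cong: if_cong)
qed

lemma smult_smult_mat: "a \<cdot>\<^sub>m (b \<cdot>\<^sub>m (A :: 'a :: semigroup_mult mat)) = (a * b) \<cdot>\<^sub>m A"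
  by (rule eq_matI) (auto simp: mult.assoc)

lemma conj_smult_mat:
  assumes "U \<in> carrier_mat n p" "V \<in> carrier_mat p q" "A \<in> carrier_mat p p"
  shows "U * (k \<cdot>\<^sub>m A) * V = k \<cdot>\<^sub>m (U * A * (V :: 'a :: comm_ring mat))"
  using assms by (simp add: mult_smult_distrib mult_smult_assoc_mat[of _ n p _ q])

lemma orthogonal_conj_mult:
  assumes U: "U \<in> carrier_mat p p" "transpose_mat U * U = 1\<^sub>m p"
    and A: "A \<in> carrier_mat p p" and B: "B \<in> carrier_mat p p"
  shows "(a \<cdot>\<^sub>m (U * A * transpose_mat U)) * (b \<cdot>\<^sub>m (U * B * transpose_mat U))
    = (a * b) \<cdot>\<^sub>m (U * (A * B) * transpose_mat (U :: 'a :: comm_ring_1 mat))"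
proof -
  have Ut: "transpose_mat U \<in> carrier_mat p p" using U by simp
  have UA: "U * A \<in> carrier_mat p p" using U(1) A by (rule mult_carrier_mat)
  have UB: "U * B \<in> carrier_mat p p" using U(1) B by (rule mult_carrier_mat)
  have BU: "B * transpose_mat U \<in> carrier_mat p p" using B Ut by (rule mult_carrier_mat)
  have X: "U * A * transpose_mat U \<in> carrier_mat p p" using UA Ut by (rule mult_carrier_mat)
  have Y: "U * B * transpose_mat U \<in> carrier_mat p p" using UB Ut by (rule mult_carrier_mat)
  have "(U * A * transpose_mat U) * (U * B * transpose_mat U)
      = (U * A * transpose_mat U) * (U * (B * transpose_mat U))"
    unfolding assoc_mult_mat[OF U(1) B Ut] ..
  also have "\<dots> = (U * A) * (transpose_mat U * (U * (B * transpose_mat U)))"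
    by (rule assoc_mult_mat[OF UA Ut mult_carrier_mat[OF U(1) BU]])
  also have "transpose_mat U * (U * (B * transpose_mat U)) = B * transpose_mat U"
    unfolding assoc_mult_mat[OF Ut U(1) BU, symmetric] U(2) by (rule left_mult_one_mat[OF BU])
  also have "(U * A) * (B * transpose_mat U) = ((U * A) * B) * transpose_mat U"
    by (rule assoc_mult_mat[OF UA B Ut, symmetric])
  also have "(U * A) * B = U * (A * B)"
    by (rule assoc_mult_mat[OF U(1) A B])
  finally have "(U * A * transpose_mat U) * (U * B * transpose_mat U) = U * (A * B) * transpose_mat U" .
  moreover have "(a \<cdot>\<^sub>m (U * A * transpose_mat U)) * (b \<cdot>\<^sub>m (U * B * transpose_mat U))
      = a \<cdot>\<^sub>m (b \<cdot>\<^sub>m ((U * A * transpose_mat U) * (U * B * transpose_mat U)))"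
    unfolding mult_smult_assoc_mat[OF X smult_carrier_mat[OF Y], of a] mult_smult_distrib[OF X Y, of b] ..
  ultimately show ?thesis by (simp add: smult_smult_mat)
qed

lemma orthogonal_conj_cancel:
  assumes U: "U \<in> carrier_mat p p" "transpose_mat U * U = 1\<^sub>m p" and E: "E \<in> carrier_mat p p"
  shows "transpose_mat U * (U * E * transpose_mat U) * U = (E :: 'a :: comm_ring_1 mat)"
proof -
  have Ut: "transpose_mat U \<in> carrier_mat p p" using U by simp
  have UE: "U * E \<in> carrier_mat p p" using U E by simp
  have UEU: "U * E * transpose_mat U \<in> carrier_mat p p" using UE Ut by (rule mult_carrier_mat)
  have "transpose_mat U * (U * E * transpose_mat U) * U = transpose_mat U * ((U * E * transpose_mat U) * U)"
    by (rule assoc_mult_mat[OF Ut UEU U(1)])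
  also have "(U * E * transpose_mat U) * U = (U * E) * (transpose_mat U * U)"
    by (rule assoc_mult_mat[OF UE Ut U(1)])
  also have "\<dots> = U * E" unfolding U(2) by (rule right_mult_one_mat[OF UE])
  also have "transpose_mat U * (U * E) = (transpose_mat U * U) * E"
    by (rule assoc_mult_mat[OF Ut U(1) E, symmetric])
  finally show ?thesis using U E by simp
qed

lemma scalar_one_conj:
  assumes W: "W \<in> carrier_mat p p"
  shows "(k \<cdot>\<^sub>m 1\<^sub>m p) * W * transpose_mat (k \<cdot>\<^sub>m 1\<^sub>m p) = (k * k) \<cdot>\<^sub>m (W :: 'a :: comm_ring_1 mat)"
proof -
  have t: "transpose_mat (k \<cdot>\<^sub>m 1\<^sub>m p) = k \<cdot>\<^sub>m 1\<^sub>m p" by (rule eq_matI) auto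
  have 1: "(k \<cdot>\<^sub>m 1\<^sub>m p) * W = k \<cdot>\<^sub>m W"
    using mult_smult_assoc_mat[OF one_carrier_mat W, of k] W by simp
  have 2: "(k \<cdot>\<^sub>m W) * (k \<cdot>\<^sub>m 1\<^sub>m p) = k \<cdot>\<^sub>m (k \<cdot>\<^sub>m W)"
    using mult_smult_assoc_mat[OF W smult_carrier_mat[OF one_carrier_mat], of k k]
      mult_smult_distrib[OF W one_carrier_mat, of k] W by simp
  show ?thesis unfolding t 1 2 smult_smult_mat ..
qed

lemma conj_index_add_add_diff_diff:
  assumes U: "U \<in> carrier_mat p p"
    and A: "A1 \<in> carrier_mat p p" "A2 \<in> carrier_mat p p" "A3 \<in> carrier_mat p p" "A4 \<in> carrier_mat p p"
    and a: "a < p" and b: "b < p"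
  shows "(transpose_mat U * (A1 + A2 - A3 - A4) * U) $$ (a, b)
    = (transpose_mat U * A1 * U) $$ (a, b) + (transpose_mat U * A2 * U) $$ (a, b)
      - (transpose_mat U * A3 * U) $$ (a, b) - (transpose_mat U * (A4 :: real mat) * U) $$ (a, b)"
proof -
  have Ut: "transpose_mat U \<in> carrier_mat p p" using U by simp
  have S: "A1 + A2 - A3 - A4 \<in> carrier_mat p p" by (rule minus_carrier_mat[OF A(4)])
  have e: "\<And>B. B \<in> carrier_mat p p \<Longrightarrow> (transpose_mat U * B * U) $$ (a, b)
     = (\<Sum>x<p. \<Sum>y<p. transpose_mat U $$ (a, x) * B $$ (x, y) * U $$ (y, b))"
    by (rule index_mult_mat3[OF Ut _ U a b])
  have "(\<Sum>x<p. \<Sum>y<p. transpose_mat U $$ (a, x) * (A1 + A2 - A3 - A4) $$ (x, y) * U $$ (y, b))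
    = (\<Sum>x<p. \<Sum>y<p. transpose_mat U $$ (a, x) * A1 $$ (x, y) * U $$ (y, b)
       + transpose_mat U $$ (a, x) * A2 $$ (x, y) * U $$ (y, b)
       - transpose_mat U $$ (a, x) * A3 $$ (x, y) * U $$ (y, b)
       - transpose_mat U $$ (a, x) * A4 $$ (x, y) * U $$ (y, b))"
    using A by (intro sum.cong refl) (simp add: algebra_simps)
  then show ?thesis
    unfolding e[OF S] e[OF A(1)] e[OF A(2)] e[OF A(3)] e[OF A(4)]
    by (simp only: sum.distrib sum_subtractf)
qed

lemma diagonal_mat_smult: "diagonal_mat (A :: 'a :: semiring_0 mat) \<Longrightarrow> diagonal_mat (k \<cdot>\<^sub>m A)"
  by (simp add: diagonal_mat_def)

lemma sum_sum_if_eq: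
  fixes f :: "nat \<Rightarrow> nat \<Rightarrow> 'a :: comm_monoid_add"
  assumes "i < p" "j < p"
  shows "(\<Sum>x<p. \<Sum>y<p. if x = i \<and> y = j then f x y else 0) = f i j"
proof -
  have "(\<Sum>y<p. if x = i \<and> y = j then f x y else 0) = (if x = i then f x j else 0)" for x
    using assms by (auto simp: sum.delta' cong: if_cong)
  then show ?thesis using assms by (simp add: sum.delta')
qed

lemma sum_sum_if_diag:
  fixes f :: "nat \<Rightarrow> nat \<Rightarrow> 'a :: comm_monoid_add"
  shows "(\<Sum>x<p. \<Sum>y<p. if x = y then f x y else 0) = (\<Sum>x<p. f x x)"
  by (rule sum.cong) (auto simp: sum.delta)

lemma Eij_carrier[simp]: "Eij p i j \<in> carrier_mat p p"
  by (simp add: Eij_def)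

lemma Eij_dims[simp]: "dim_row (Eij p i j) = p" "dim_col (Eij p i j) = p"
  by (simp_all add: Eij_def)

lemma Eij_index[simp]: "x < p \<Longrightarrow> y < p \<Longrightarrow> Eij p i j $$ (x, y) = (if x = i \<and> y = j then 1 else 0)"
  by (simp add: Eij_def)

lemma weighted_sum_Eij_sym_one_offdiag:
  fixes f :: "nat \<Rightarrow> nat \<Rightarrow> real"
  assumes a: "a < p" and b: "b < p" and ab: "a \<noteq> b"
  shows "(\<Sum>k<p. \<Sum>l<p. f k l * (Eij p k l + Eij p l k + 1\<^sub>m p) $$ (a, b)) = f a b + f b a"
proof -
  have "(\<Sum>k<p. \<Sum>l<p. f k l * (Eij p k l + Eij p l k + 1\<^sub>m p) $$ (a, b))
      = (\<Sum>k<p. \<Sum>l<p. (if k = a \<and> l = b then f k l else 0) + (if k = b \<and> l = a then f k l else 0))"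
    using a b ab by (intro sum.cong refl) auto
  then show ?thesis by (simp only: sum.distrib sum_sum_if_eq[OF a b] sum_sum_if_eq[OF b a])
qed

lemma orthogonal_conj_Eij_sym_one_offdiag:
  assumes U: "U \<in> carrier_mat p p" "transpose_mat U * U = 1\<^sub>m p"
    and i: "i < p" and j: "j < p" and a: "a < p" and b: "b < p" and ab: "a \<noteq> b"
  shows "(transpose_mat U * (Eij p i j + Eij p j i + 1\<^sub>m p) * U) $$ (a, b)
    = U $$ (i, a) * U $$ (j, b) + U $$ (j, a) * U $$ (i, b)"
proof -
  let ?g = "\<lambda>x y. U $$ (x, a) * U $$ (y, b)"
  have "(transpose_mat U * (Eij p i j + Eij p j i + 1\<^sub>m p) * U) $$ (a, b)
      = (\<Sum>x<p. \<Sum>y<p. transpose_mat U $$ (a, x) * (Eij p i j + Eij p j i + 1\<^sub>m p) $$ (x, y) * U $$ (y, b))"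
    using U a b by (intro index_mult_mat3) auto
  also have "\<dots> = (\<Sum>x<p. \<Sum>y<p. (if x = i \<and> y = j then ?g x y else 0)
      + (if x = j \<and> y = i then ?g x y else 0) + (if x = y then ?g x y else 0))"
    using U a b by (intro sum.cong refl) (auto simp: algebra_simps)
  also have "\<dots> = ?g i j + ?g j i + (\<Sum>x<p. ?g x x)"
    by (simp only: sum.distrib sum_sum_if_eq[OF i j] sum_sum_if_eq[OF j i] sum_sum_if_diag)
  also have "(\<Sum>x<p. ?g x x) = 0"
    using orthogonal_columns_inner[OF U a b] ab by simp
  finally show ?thesis by simp
qed

section \<open>Mode Gram matrices\<close>

text \<open>The Gram matrix \<open>flat ps m Y * (flat ps m Y')\<^sup>T\<close> of two \<open>m\<close>-flattenings
  (\<open>flat_mult_transpose_flat\<close>), written as a sum over multi-indices so that the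
  column order of the flattening disappears.\<close>
definition mode_gram :: "nat list \<Rightarrow> nat \<Rightarrow> tensor \<Rightarrow> tensor \<Rightarrow> real mat" where
  "mode_gram ps m Y Y' = mat (ps ! m) (ps ! m)
     (\<lambda>(i, j). \<Sum>ix\<in>tidx ps. if ix ! m = i then Y ix * Y' (ix[m := j]) else 0)"

lemma mode_gram_carrier[simp]: "mode_gram ps m Y Y' \<in> carrier_mat (ps ! m) (ps ! m)"
  by (simp add: mode_gram_def)

lemma mode_gram_dims[simp]:
  "dim_row (mode_gram ps m Y Y') = ps ! m" "dim_col (mode_gram ps m Y Y') = ps ! m"
  by (simp_all add: mode_gram_def)

lemma flat_carrier[simp]: "flat ps m A \<in> carrier_mat (ps ! m) (rho ps m)"
  by (simp add: flat_def)

lemma flat_mult_transpose_flat: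
  assumes m: "m < length ps"
  shows "flat ps m A * transpose_mat (flat ps m B) = mode_gram ps m A B"
proof (rule eq_matI)
  fix i j assume "i < dim_row (mode_gram ps m A B)" and "j < dim_col (mode_gram ps m A B)"
  then have i: "i < ps ! m" and j: "j < ps ! m" by auto
  let ?od = "other_dims ps m"
  have len: "m \<le> length c" if "c \<in> tidx ?od" for c
    using m that by (auto simp: tidx_length other_dims_def)
  have "(flat ps m A * transpose_mat (flat ps m B)) $$ (i, j)
      = (\<Sum>k<rho ps m. A (ins_at m i (mr_decode ?od k)) * B (ins_at m j (mr_decode ?od k)))"
    using i j by (simp add: flat_def scalar_prod_def atLeast0LessThan)
  also have "\<dots> = (\<Sum>c\<in>tidx ?od. A (ins_at m i c) * B (ins_at m j c))"
    using sum.reindex_bij_betw[OF bij_betw_mr_decode[of ?od]] by (simp add: rho_def)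
  also have "\<dots> = (\<Sum>c\<in>tidx ?od. A (ins_at m i c) * B ((ins_at m i c)[m := j]))"
    by (rule sum.cong) (auto simp: ins_at_def list_update_append len)
  also have "\<dots> = (\<Sum>ix\<in>{ix\<in>tidx ps. ix ! m = i}. A ix * B (ix[m := j]))"
    by (rule sum.reindex_bij_betw[OF bij_betw_ins_at[OF m i]])
  also have "\<dots> = mode_gram ps m A B $$ (i, j)"
    using i j by (simp add: mode_gram_def sum.inter_filter)
  finally show "(flat ps m A * transpose_mat (flat ps m B)) $$ (i, j) = mode_gram ps m A B $$ (i, j)" .
qed (auto simp: flat_def)

lemma mode_gram_index:
  assumes m: "m < length ps" and a: "a < ps ! m" and b: "b < ps ! m"
  shows "mode_gram ps m Y Y' $$ (a, b)
    = (\<Sum>ix\<in>{ix\<in>tidx ps. ix ! m = 0}. Y (ix[m := a]) * Y' (ix[m := b]))"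
proof -
  have "mode_gram ps m Y Y' $$ (a, b)
      = (\<Sum>ix\<in>tidx ps. if ix ! m = a then Y ix * Y' (ix[m := b]) else 0)"
    using a b by (simp add: mode_gram_def)
  also have "\<dots> = (\<Sum>ix\<in>{ix\<in>tidx ps. ix ! m = 0}. \<Sum>x<ps ! m.
        if ix[m := x] ! m = a then Y (ix[m := x]) * Y' (ix[m := x, m := b]) else 0)"
    by (rule sum_tidx_split[OF m])
  also have "\<dots> = (\<Sum>ix\<in>{ix\<in>tidx ps. ix ! m = 0}. Y (ix[m := a]) * Y' (ix[m := b]))"
    using m a by (intro sum.cong refl) (auto simp: tidx_length)
  finally show ?thesis .
qed

lemma mode_gram_mode_prod_same:
  assumes m: "m < length ps" and A: "A \<in> carrier_mat (ps ! m) (ps ! m)"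
  shows "mode_gram ps m (mode_prod ps m Y A) (mode_prod ps m Y' A)
    = A * mode_gram ps m Y Y' * transpose_mat A"
proof (rule eq_matI)
  fix i j assume "i < dim_row (A * mode_gram ps m Y Y' * transpose_mat A)"
    "j < dim_col (A * mode_gram ps m Y Y' * transpose_mat A)"
  then have i: "i < ps ! m" and j: "j < ps ! m" using A by auto
  let ?T0 = "{ix\<in>tidx ps. ix ! m = 0}" and ?p = "ps ! m"
  have len: "m < length ix" if "ix \<in> ?T0" for ix using m that by (auto simp: tidx_length)
  have "mode_gram ps m (mode_prod ps m Y A) (mode_prod ps m Y' A) $$ (i, j)
     = (\<Sum>ix\<in>?T0. (\<Sum>a<?p. Y (ix[m := a]) * A $$ (i, a)) * (\<Sum>b<?p. Y' (ix[m := b]) * A $$ (j, b)))"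
    unfolding mode_gram_index[OF m i j] using len by (intro sum.cong refl) (simp add: mode_prod_def)
  also have "\<dots> = (\<Sum>ix\<in>?T0. \<Sum>a<?p. \<Sum>b<?p. A $$ (i, a) * (Y (ix[m := a]) * Y' (ix[m := b])) * A $$ (j, b))"
    by (simp add: sum_product mult_ac)
  also have "\<dots> = (\<Sum>a<?p. \<Sum>b<?p. \<Sum>ix\<in>?T0. A $$ (i, a) * (Y (ix[m := a]) * Y' (ix[m := b])) * A $$ (j, b))"
    by (subst sum.swap) (rule sum.cong[OF refl], rule sum.swap)
  also have "\<dots> = (\<Sum>a<?p. \<Sum>b<?p. A $$ (i, a) * mode_gram ps m Y Y' $$ (a, b) * transpose_mat A $$ (b, j))"
    using A j by (intro sum.cong refl) (simp add: mode_gram_index[OF m] sum_distrib_left sum_distrib_right)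
  also have "\<dots> = (A * mode_gram ps m Y Y' * transpose_mat A) $$ (i, j)"
    using A i j by (intro index_mult_mat3[symmetric]) auto
  finally show "mode_gram ps m (mode_prod ps m Y A) (mode_prod ps m Y' A) $$ (i, j)
     = (A * mode_gram ps m Y Y' * transpose_mat A) $$ (i, j)" .
qed (use A in auto)

lemma mode_gram_mode_prod_orthogonal:
  assumes m: "m < length ps" and n: "n < length ps" and nm: "n \<noteq> m"
    and A: "A \<in> carrier_mat (ps ! n) (ps ! n)" "transpose_mat A * A = 1\<^sub>m (ps ! n)"
  shows "mode_gram ps m (mode_prod ps n Y A) (mode_prod ps n Y' A) = mode_gram ps m Y Y'"
proof (rule eq_matI)
  fix i j assume "i < dim_row (mode_gram ps m Y Y')" "j < dim_col (mode_gram ps m Y Y')"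
  then have i: "i < ps ! m" and j: "j < ps ! m" by auto
  let ?T0 = "{ix\<in>tidx ps. ix ! n = 0}" and ?p = "ps ! n"
  have len: "n < length ix \<and> m < length ix" if "ix \<in> ?T0" for ix
    using m n that by (auto simp: tidx_length)
  have "mode_gram ps m (mode_prod ps n Y A) (mode_prod ps n Y' A) $$ (i, j)
    = (\<Sum>ix\<in>?T0. \<Sum>x<?p. if ix[n := x] ! m = i then mode_prod ps n Y A (ix[n := x])
                   * mode_prod ps n Y' A (ix[n := x, m := j]) else 0)"
    using i j by (simp add: mode_gram_def sum_tidx_split[OF n])
  also have "\<dots> = (\<Sum>ix\<in>?T0. \<Sum>x<?p. if ix ! m = i then (\<Sum>a<?p. Y (ix[n := a]) * A $$ (x, a))
                   * (\<Sum>b<?p. Y' (ix[m := j, n := b]) * A $$ (x, b)) else 0)"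
    using len nm by (intro sum.cong refl) (simp add: mode_prod_def list_update_swap[of n m])
  also have "\<dots> = (\<Sum>ix\<in>?T0. if ix ! m = i then (\<Sum>a<?p. Y (ix[n := a]) * Y' (ix[m := j, n := a])) else 0)"
    by (intro sum.cong refl) (simp add: orthogonal_inner_preserving[OF A] sum.If_cases)
  also have "\<dots> = (\<Sum>ix\<in>?T0. \<Sum>x<?p. if ix[n := x] ! m = i then Y (ix[n := x]) * Y' (ix[n := x, m := j]) else 0)"
    using len nm by (intro sum.cong refl) (simp add: list_update_swap[of n m])
  also have "\<dots> = mode_gram ps m Y Y' $$ (i, j)"
    using i j by (simp add: mode_gram_def sum_tidx_split[OF n])
  finally show "mode_gram ps m (mode_prod ps n Y A) (mode_prod ps n Y' A) $$ (i, j)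
    = mode_gram ps m Y Y' $$ (i, j)" .
qed auto

lemma mode_gram_foldl_mode_prod:
  assumes m: "m < length ps"
    and U: "\<forall>n<length ps. U n \<in> carrier_mat (ps ! n) (ps ! n) \<and> transpose_mat (U n) * U n = 1\<^sub>m (ps ! n)"
    and ns: "distinct ns" "set ns \<subseteq> {..<length ps}"
  shows "mode_gram ps m (foldl (\<lambda>Y n. mode_prod ps n Y (U n)) Y ns)
      (foldl (\<lambda>Y n. mode_prod ps n Y (U n)) Y' ns)
    = (if m \<in> set ns then U m * mode_gram ps m Y Y' * transpose_mat (U m) else mode_gram ps m Y Y')"
  using ns
proof (induction ns rule: rev_induct)
  case (snoc n ns)
  have n: "n < length ps" using snoc.prems by simp
  show ?case
  proof (cases "n = m")
    case True
    then show ?thesis using snoc mode_gram_mode_prod_same[OF m] U m by simp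
  next
    case False
    then show ?thesis using snoc mode_gram_mode_prod_orthogonal[OF m n False] U n by simp
  qed
qed simp

lemma mode_gram_mode_prods:
  assumes m: "m < length ps"
    and U: "\<forall>n<length ps. U n \<in> carrier_mat (ps ! n) (ps ! n) \<and> transpose_mat (U n) * U n = 1\<^sub>m (ps ! n)"
  shows "mode_gram ps m (mode_prods ps U Y) (mode_prods ps U Y')
    = U m * mode_gram ps m Y Y' * transpose_mat (U m)"
  unfolding mode_prods_def using mode_gram_foldl_mode_prod[OF m U, of "[0..<length ps]"] m
  by (simp add: atLeast0LessThan)

lemma mode_gram_cong:
  assumes "\<And>ix. ix \<in> tidx ps \<Longrightarrow> Y ix = Z ix" "\<And>ix. ix \<in> tidx ps \<Longrightarrow> Y' ix = Z' ix"
  shows "mode_gram ps m Y Y' = mode_gram ps m Z Z'"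
  unfolding mode_gram_def by (rule eq_matI) (auto intro!: sum.cong simp: assms tidx_update)

lemma mode_gram_scale:
  "mode_gram ps m (\<lambda>ix. a * Y ix) (\<lambda>ix. b * Y' ix) = (a * b) \<cdot>\<^sub>m mode_gram ps m Y Y'"
  unfolding mode_gram_def by (rule eq_matI) (auto simp: sum_distrib_left intro!: sum.cong)

section \<open>Expectations of random matrices\<close>

lemma abs_mult_le_half_sum_squares: "\<bar>(x::real) * y\<bar> \<le> (x\<^sup>2 + y\<^sup>2) / 2"
proof -
  have "0 \<le> (\<bar>x\<bar> - \<bar>y\<bar>)\<^sup>2" by simp
  then show ?thesis by (simp add: power2_eq_square algebra_simps abs_mult)
qed

lemma abs_mult4_le_quarter_sum_powers:
  "\<bar>(x::real) * y * z * w\<bar> \<le> (x ^ 4 + y ^ 4 + z ^ 4 + w ^ 4) / 4"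
proof -
  have "\<bar>(x * y) * (z * w)\<bar> \<le> ((x * y)\<^sup>2 + (z * w)\<^sup>2) / 2"
    by (rule abs_mult_le_half_sum_squares)
  moreover have "\<bar>x\<^sup>2 * y\<^sup>2\<bar> \<le> (x ^ 4 + y ^ 4) / 2" "\<bar>z\<^sup>2 * w\<^sup>2\<bar> \<le> (z ^ 4 + w ^ 4) / 2"
    using abs_mult_le_half_sum_squares[of "x\<^sup>2" "y\<^sup>2"] abs_mult_le_half_sum_squares[of "z\<^sup>2" "w\<^sup>2"]
    by (simp_all flip: power_mult)
  ultimately show ?thesis by (simp add: power_mult_distrib mult_ac)
qed

lemma integrable_mult4_L4:
  fixes f g h k :: "'a \<Rightarrow> real"
  assumes "f \<in> borel_measurable M" "g \<in> borel_measurable M"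
    "h \<in> borel_measurable M" "k \<in> borel_measurable M"
    and "integrable M (\<lambda>x. f x ^ 4)" "integrable M (\<lambda>x. g x ^ 4)"
    "integrable M (\<lambda>x. h x ^ 4)" "integrable M (\<lambda>x. k x ^ 4)"
  shows "integrable M (\<lambda>x. f x * g x * h x * k x)"
proof (rule Bochner_Integration.integrable_bound)
  show "integrable M (\<lambda>x. (f x ^ 4 + g x ^ 4 + h x ^ 4 + k x ^ 4) / 4)"
    using assms by auto
  show "AE x in M. norm (f x * g x * h x * k x) \<le> norm ((f x ^ 4 + g x ^ 4 + h x ^ 4 + k x ^ 4) / 4)"
    using abs_mult4_le_quarter_sum_powers by (intro AE_I2) simp
qed (use assms in auto)

lemma integral_double_sum:
  fixes f :: "nat \<Rightarrow> nat \<Rightarrow> 'a \<Rightarrow> real"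
  assumes "\<And>x y. x < p \<Longrightarrow> y < q \<Longrightarrow> integrable M (f x y)"
  shows "(\<integral>\<omega>. (\<Sum>x<p. \<Sum>y<q. c x y * f x y \<omega>) \<partial>M) = (\<Sum>x<p. \<Sum>y<q. c x y * integral\<^sup>L M (f x y))"
proof -
  have int: "integrable M (\<lambda>\<omega>. c x y * f x y \<omega>)" if "x < p" "y < q" for x y
    using assms[OF that] by simp
  have "(\<integral>\<omega>. (\<Sum>x<p. \<Sum>y<q. c x y * f x y \<omega>) \<partial>M)
      = (\<Sum>x<p. \<integral>\<omega>. (\<Sum>y<q. c x y * f x y \<omega>) \<partial>M)"
    by (rule Bochner_Integration.integral_sum) (auto intro!: Bochner_Integration.integrable_sum int)
  also have "\<dots> = (\<Sum>x<p. \<Sum>y<q. c x y * integral\<^sup>L M (f x y))"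
    by (intro sum.cong refl, subst Bochner_Integration.integral_sum) (auto intro: int assms)
  finally show ?thesis .
qed

definition mat_integrable :: "'a measure \<Rightarrow> nat \<Rightarrow> ('a \<Rightarrow> real mat) \<Rightarrow> bool" where
  "mat_integrable M p F \<longleftrightarrow>
     (\<forall>\<omega>. F \<omega> \<in> carrier_mat p p) \<and> (\<forall>x<p. \<forall>y<p. integrable M (\<lambda>\<omega>. F \<omega> $$ (x, y)))"

lemma mat_expect_carrier[simp]: "mat_expect M n k F \<in> carrier_mat n k"
  by (simp add: mat_expect_def)

lemma mat_expect_dims[simp]: "dim_row (mat_expect M n k F) = n" "dim_col (mat_expect M n k F) = k"
  by (simp_all add: mat_expect_def)

lemma mat_expect_cong:
  "(\<And>\<omega>. \<omega> \<in> space M \<Longrightarrow> F \<omega> = G \<omega>) \<Longrightarrow> mat_expect M n k F = mat_expect M n k G"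
  unfolding mat_expect_def by (rule eq_matI) (auto intro!: Bochner_Integration.integral_cong)

lemma mat_expect_index:
  "a < n \<Longrightarrow> b < k \<Longrightarrow> mat_expect M n k F $$ (a, b) = integral\<^sup>L M (\<lambda>\<omega>. F \<omega> $$ (a, b))"
  by (simp add: mat_expect_def)

lemma mat_expect_conj:
  assumes F: "mat_integrable M p F" and U: "U \<in> carrier_mat p p"
  shows "mat_expect M p p (\<lambda>\<omega>. k \<cdot>\<^sub>m (U * F \<omega> * transpose_mat U))
    = k \<cdot>\<^sub>m (U * mat_expect M p p F * transpose_mat U)"
proof (rule eq_matI)
  fix a b assume "a < dim_row (k \<cdot>\<^sub>m (U * mat_expect M p p F * transpose_mat U))"
    "b < dim_col (k \<cdot>\<^sub>m (U * mat_expect M p p F * transpose_mat U))"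
  then have a: "a < p" and b: "b < p" using U by auto
  let ?c = "\<lambda>x y. k * (U $$ (a, x) * U $$ (b, y))"
  have "(U * G * transpose_mat U) $$ (a, b) = (\<Sum>x<p. \<Sum>y<p. U $$ (a, x) * G $$ (x, y) * U $$ (b, y))"
    if "G \<in> carrier_mat p p" for G
    using index_mult_mat3[OF U that _ a b, of "transpose_mat U"] U b by simp
  then have entry: "(k \<cdot>\<^sub>m (U * G * transpose_mat U)) $$ (a, b) = (\<Sum>x<p. \<Sum>y<p. ?c x y * G $$ (x, y))"
    if "G \<in> carrier_mat p p" for G
    using that a b U by (simp add: sum_distrib_left mult_ac)
  have "mat_expect M p p (\<lambda>\<omega>. k \<cdot>\<^sub>m (U * F \<omega> * transpose_mat U)) $$ (a, b)
      = (\<integral>\<omega>. (\<Sum>x<p. \<Sum>y<p. ?c x y * F \<omega> $$ (x, y)) \<partial>M)"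
    using a b F entry by (simp add: mat_expect_index mat_integrable_def)
  also have "\<dots> = (\<Sum>x<p. \<Sum>y<p. ?c x y * integral\<^sup>L M (\<lambda>\<omega>. F \<omega> $$ (x, y)))"
    using F unfolding mat_integrable_def by (intro integral_double_sum) auto
  also have "\<dots> = (k \<cdot>\<^sub>m (U * mat_expect M p p F * transpose_mat U)) $$ (a, b)"
    by (simp add: entry mat_expect_index)
  finally show "mat_expect M p p (\<lambda>\<omega>. k \<cdot>\<^sub>m (U * F \<omega> * transpose_mat U)) $$ (a, b)
     = (k \<cdot>\<^sub>m (U * mat_expect M p p F * transpose_mat U)) $$ (a, b)" .
qed (use U in \<open>auto simp: mat_expect_def\<close>)

lemma scaled_mat_expect_conj:
  assumes F: "mat_integrable M p F" and U: "U \<in> carrier_mat p p"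
    and G: "\<And>\<omega>. \<omega> \<in> space M \<Longrightarrow> G \<omega> = k \<cdot>\<^sub>m (U * F \<omega> * transpose_mat U)"
  shows "r \<cdot>\<^sub>m mat_expect M p p G = k \<cdot>\<^sub>m (U * (r \<cdot>\<^sub>m mat_expect M p p F) * transpose_mat U)"
proof -
  have "mat_expect M p p G = k \<cdot>\<^sub>m (U * mat_expect M p p F * transpose_mat U)"
    using mat_expect_cong[of M G "\<lambda>\<omega>. k \<cdot>\<^sub>m (U * F \<omega> * transpose_mat U)"] G mat_expect_conj[OF F U]
    by simp
  then show ?thesis using U
    by (simp add: conj_smult_mat[of _ p p _ p] smult_smult_mat mult.commute)
qed

lemma orthogonal_conj_scaled_mat_expect:
  assumes F: "mat_integrable M p F" and U: "U \<in> carrier_mat p p" "transpose_mat U * U = 1\<^sub>m p"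
    and G: "\<And>\<omega>. \<omega> \<in> space M \<Longrightarrow> G \<omega> = k \<cdot>\<^sub>m (U * F \<omega> * transpose_mat U)"
  shows "transpose_mat U * (r \<cdot>\<^sub>m mat_expect M p p G) * U = k \<cdot>\<^sub>m (r \<cdot>\<^sub>m mat_expect M p p F)"
proof -
  let ?E = "r \<cdot>\<^sub>m mat_expect M p p F"
  have C: "U * ?E * transpose_mat U \<in> carrier_mat p p"
    using U(1) by (intro mult_carrier_mat[of _ p p]) auto
  have "transpose_mat U * (r \<cdot>\<^sub>m mat_expect M p p G) * U
      = transpose_mat U * (k \<cdot>\<^sub>m (U * ?E * transpose_mat U)) * U"
    by (simp only: scaled_mat_expect_conj[OF F U(1) G])
  also have "\<dots> = k \<cdot>\<^sub>m (transpose_mat U * (U * ?E * transpose_mat U) * U)"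
    using U(1) C by (intro conj_smult_mat) auto
  also have "\<dots> = k \<cdot>\<^sub>m ?E"
    using orthogonal_conj_cancel[OF U, of ?E] by simp
  finally show ?thesis .
qed

lemma Sigma_m_eq_mode_gram:
  assumes "m < length ps"
  shows "Sigma_m M ps m W t \<tau> = (1 / real (rho ps m)) \<cdot>\<^sub>m
    mat_expect M (ps ! m) (ps ! m) (\<lambda>\<omega>. mode_gram ps m (W t \<omega>) (W (t + \<tau>) \<omega>))"
  unfolding Sigma_m_def flat_mult_transpose_flat[OF assms] ..

lemma B_m_eq_mode_gram:
  assumes m: "m < length ps"
  shows "B_m M ps m W t \<tau> = (1 / real (rho ps m)) \<cdot>\<^sub>m mat_expect M (ps ! m) (ps ! m)
     (\<lambda>\<omega>. mode_gram ps m (W t \<omega>) (W (t + \<tau>) \<omega>) * mode_gram ps m (W (t + \<tau>) \<omega>) (W t \<omega>))"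
proof -
  have "flat ps m A * transpose_mat (flat ps m B) * flat ps m B * transpose_mat (flat ps m A)
      = (flat ps m A * transpose_mat (flat ps m B)) * (flat ps m B * transpose_mat (flat ps m A))"
    for A B
  proof (rule assoc_mult_mat)
    show "flat ps m A * transpose_mat (flat ps m B) \<in> carrier_mat (ps ! m) (ps ! m)"
      by (rule mult_carrier_mat[of _ _ "rho ps m"]) auto
  qed (auto simp: flat_def)
  then show ?thesis unfolding B_m_def flat_mult_transpose_flat[OF m] by simp
qed

lemma B4_m_eq_mode_gram:
  assumes "m < length ps"
  shows "B4_m M ps m W t \<alpha> \<beta> \<gamma> \<delta> i j = (1 / real (rho ps m)) \<cdot>\<^sub>m mat_expect M (ps ! m) (ps ! m)
     (\<lambda>\<omega>. mode_gram ps m (W (t + \<alpha>) \<omega>) (W (t + \<beta>) \<omega>) $$ (i, j)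
            \<cdot>\<^sub>m mode_gram ps m (W (t + \<gamma>) \<omega>) (W (t + \<delta>) \<omega>))"
  unfolding B4_m_def flat_mult_transpose_flat[OF assms] ..

lemma B4_m_carrier[simp]: "B4_m M ps m W t \<alpha> \<beta> \<gamma> \<delta> i j \<in> carrier_mat (ps ! m) (ps ! m)"
  by (simp add: B4_m_def)

lemma B4_m_dims[simp]:
  "dim_row (B4_m M ps m W t \<alpha> \<beta> \<gamma> \<delta> i j) = ps ! m" "dim_col (B4_m M ps m W t \<alpha> \<beta> \<gamma> \<delta> i j) = ps ! m"
  by (simp_all add: B4_m_def)

lemma C_m_carrier: "C_m M ps m W t \<tau> i j \<in> carrier_mat (ps ! m) (ps ! m)"
proof -
  have "Sigma_m M ps m W t 0 \<in> carrier_mat (ps ! m) (ps ! m)" by (simp add: Sigma_m_def)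
  then show ?thesis unfolding C_m_def
    by (intro minus_carrier_mat mult_carrier_mat[of _ _ "ps ! m"]) auto
qed

section \<open>Rotated white tensor series\<close>

locale L4_tensor_series =
  fixes M :: "'a measure" and ps :: "nat list" and Z :: "int \<Rightarrow> 'a \<Rightarrow> tensor"
  assumes prob: "prob_space M"
    and measurable: "\<forall>t. \<forall>ix \<in> tidx ps. (\<lambda>\<omega>. Z t \<omega> ix) \<in> borel_measurable M"
    and fourth_moments: "\<forall>t. \<forall>ix \<in> tidx ps. integrable M (\<lambda>\<omega>. (Z t \<omega> ix) ^ 4)"
begin

lemma integrable_Z_mult4:
  assumes "i1 \<in> tidx ps" "i2 \<in> tidx ps" "i3 \<in> tidx ps" "i4 \<in> tidx ps"
  shows "integrable M (\<lambda>\<omega>. Z t1 \<omega> i1 * Z t2 \<omega> i2 * Z t3 \<omega> i3 * Z t4 \<omega> i4)"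
  using assms measurable fourth_moments by (intro integrable_mult4_L4) auto

lemma integrable_Z_mult:
  assumes "i1 \<in> tidx ps" "i2 \<in> tidx ps"
  shows "integrable M (\<lambda>\<omega>. Z t1 \<omega> i1 * Z t2 \<omega> i2)"
proof -
  have "integrable M (\<lambda>\<omega>. Z t1 \<omega> i1 * Z t2 \<omega> i2 * (\<lambda>_. 1::real) \<omega> * (\<lambda>_. 1::real) \<omega>)"
    using assms measurable fourth_moments prob_space.finite_measure[OF prob]
    by (intro integrable_mult4_L4) (auto intro: finite_measure.integrable_const)
  then show ?thesis by simp
qed

lemma integrable_mode_gram_index:
  assumes "a < ps ! m" "b < ps ! m"
  shows "integrable M (\<lambda>\<omega>. mode_gram ps m (Z t \<omega>) (Z s \<omega>) $$ (a, b))"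
proof -
  have "integrable M (\<lambda>\<omega>. if ix ! m = a then Z t \<omega> ix * Z s \<omega> (ix[m := b]) else 0)"
    if ix: "ix \<in> tidx ps" for ix
    using integrable_Z_mult[OF ix tidx_update[OF ix assms(2)]] by (cases "ix ! m = a") auto
  then show ?thesis using assms by (simp add: mode_gram_def Bochner_Integration.integrable_sum)
qed

lemma integrable_mode_gram_index_mult:
  assumes a: "a < ps ! m" and b: "b < ps ! m" and c: "c < ps ! m" and d: "d < ps ! m"
  shows "integrable M (\<lambda>\<omega>. mode_gram ps m (Z t1 \<omega>) (Z s1 \<omega>) $$ (a, b)
                          * mode_gram ps m (Z t2 \<omega>) (Z s2 \<omega>) $$ (c, d))"
proof -
  have "integrable M (\<lambda>\<omega>. (if ix ! m = a then Z t1 \<omega> ix * Z s1 \<omega> (ix[m := b]) else 0) *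
     (if jx ! m = c then Z t2 \<omega> jx * Z s2 \<omega> (jx[m := d]) else 0))"
    if ix: "ix \<in> tidx ps" and jx: "jx \<in> tidx ps" for ix jx
    using integrable_Z_mult4[OF ix tidx_update[OF ix b] jx tidx_update[OF jx d]]
    by (cases "ix ! m = a"; cases "jx ! m = c") (auto simp: mult_ac)
  then show ?thesis using a b c d
    by (simp add: mode_gram_def sum_product Bochner_Integration.integrable_sum)
qed

lemma mat_integrable_mode_gram: "mat_integrable M (ps ! m) (\<lambda>\<omega>. mode_gram ps m (Z t \<omega>) (Z s \<omega>))"
  unfolding mat_integrable_def using integrable_mode_gram_index by auto

lemma mat_integrable_mode_gram_mult:
  "mat_integrable M (ps ! m) (\<lambda>\<omega>. mode_gram ps m (Z t1 \<omega>) (Z t2 \<omega>) * mode_gram ps m (Z t3 \<omega>) (Z t4 \<omega>))"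
  unfolding mat_integrable_def
proof (intro conjI allI impI)
  fix x y assume x: "x < ps ! m" and y: "y < ps ! m"
  have "(mode_gram ps m (Z t1 \<omega>) (Z t2 \<omega>) * mode_gram ps m (Z t3 \<omega>) (Z t4 \<omega>)) $$ (x, y)
      = (\<Sum>z<ps ! m. mode_gram ps m (Z t1 \<omega>) (Z t2 \<omega>) $$ (x, z) * mode_gram ps m (Z t3 \<omega>) (Z t4 \<omega>) $$ (z, y))"
    for \<omega> using x y by (simp add: scalar_prod_def atLeast0LessThan)
  moreover have "integrable M (\<lambda>\<omega>. \<Sum>z<ps ! m.
      mode_gram ps m (Z t1 \<omega>) (Z t2 \<omega>) $$ (x, z) * mode_gram ps m (Z t3 \<omega>) (Z t4 \<omega>) $$ (z, y))"
    by (intro Bochner_Integration.integrable_sum integrable_mode_gram_index_mult[OF x _ _ y]) auto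
  ultimately show "integrable M (\<lambda>\<omega>. (mode_gram ps m (Z t1 \<omega>) (Z t2 \<omega>) * mode_gram ps m (Z t3 \<omega>) (Z t4 \<omega>)) $$ (x, y))"
    by simp
qed (auto intro: mult_carrier_mat)

lemma mat_integrable_weighted_mode_gram:
  "mat_integrable M (ps ! m) (\<lambda>\<omega>. (\<Sum>k<ps ! m. \<Sum>l<ps ! m. w k l * mode_gram ps m (Z t1 \<omega>) (Z t2 \<omega>) $$ (k, l))
      \<cdot>\<^sub>m mode_gram ps m (Z t3 \<omega>) (Z t4 \<omega>))"
  unfolding mat_integrable_def
proof (intro conjI allI impI)
  fix x y assume x: "x < ps ! m" and y: "y < ps ! m"
  have "integrable M (\<lambda>\<omega>. \<Sum>k<ps ! m. \<Sum>l<ps ! m. w k l *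
       (mode_gram ps m (Z t1 \<omega>) (Z t2 \<omega>) $$ (k, l) * mode_gram ps m (Z t3 \<omega>) (Z t4 \<omega>) $$ (x, y)))"
    by (intro Bochner_Integration.integrable_sum integrable_mult_right integrable_mode_gram_index_mult[OF _ _ x y])
      auto
  moreover have "((\<Sum>k<ps ! m. \<Sum>l<ps ! m. w k l * mode_gram ps m (Z t1 \<omega>) (Z t2 \<omega>) $$ (k, l))
      \<cdot>\<^sub>m mode_gram ps m (Z t3 \<omega>) (Z t4 \<omega>)) $$ (x, y)
    = (\<Sum>k<ps ! m. \<Sum>l<ps ! m. w k l *
       (mode_gram ps m (Z t1 \<omega>) (Z t2 \<omega>) $$ (k, l) * mode_gram ps m (Z t3 \<omega>) (Z t4 \<omega>) $$ (x, y)))"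
    for \<omega> using x y by (simp add: sum_distrib_right mult.assoc)
  ultimately show "integrable M (\<lambda>\<omega>. ((\<Sum>k<ps ! m. \<Sum>l<ps ! m. w k l * mode_gram ps m (Z t1 \<omega>) (Z t2 \<omega>) $$ (k, l))
      \<cdot>\<^sub>m mode_gram ps m (Z t3 \<omega>) (Z t4 \<omega>)) $$ (x, y))"
    by (simp only:)
qed simp

end

locale white_tensor_series = L4_tensor_series +
  assumes dims_pos: "\<forall>k < length ps. ps ! k \<ge> 1"
    and mean_zero: "\<forall>t. \<forall>is \<in> tidx ps. integral\<^sup>L M (\<lambda>\<omega>. Z t \<omega> is) = 0"
    and cov_identity: "\<forall>t. \<forall>is \<in> tidx ps. \<forall>js \<in> tidx ps.
        integral\<^sup>L M (\<lambda>\<omega>. (Z t \<omega> is - integral\<^sup>L M (\<lambda>\<omega>'. Z t \<omega>' is))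
                         * (Z t \<omega> js - integral\<^sup>L M (\<lambda>\<omega>'. Z t \<omega>' js)))
        = (if is = js then 1 else 0)"
begin

lemma rho_pos: "0 < rho ps m"
proof -
  have "0 \<notin> set ps" using dims_pos by (auto simp: in_set_conv_nth)
  then have "0 \<notin> set (other_dims ps m)"
    unfolding other_dims_def by (auto dest: in_set_takeD in_set_dropD)
  then show ?thesis unfolding rho_def by (metis gr0I prod_list_zero_iff)
qed

lemma Sigma_m_zero_lag:
  assumes m: "m < length ps"
  shows "Sigma_m M ps m Z t 0 = 1\<^sub>m (ps ! m)"
proof (rule eq_matI)
  fix a b assume "a < dim_row (1\<^sub>m (ps ! m))" "b < dim_col (1\<^sub>m (ps ! m))"
  then have a: "a < ps ! m" and b: "b < ps ! m" by auto
  let ?T0 = "{ix\<in>tidx ps. ix ! m = 0}"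
  have moment: "integral\<^sup>L M (\<lambda>\<omega>. Z t \<omega> (ix[m := a]) * Z t \<omega> (ix[m := b])) = (if a = b then 1 else 0)"
    if ix: "ix \<in> ?T0" for ix
  proof -
    from ix have "ix \<in> tidx ps" by simp
    with m have "ix[m := a] ! m = a" "ix[m := b] ! m = b" by (simp_all add: tidx_length)
    then have "(ix[m := a] = ix[m := b]) = (a = b)" by metis
    moreover have "ix[m := a] \<in> tidx ps" "ix[m := b] \<in> tidx ps" using ix a b tidx_update by auto
    ultimately show ?thesis using cov_identity mean_zero by simp
  qed
  have "Sigma_m M ps m Z t 0 $$ (a, b)
      = 1 / real (rho ps m) * (\<integral>\<omega>. (\<Sum>ix\<in>?T0. Z t \<omega> (ix[m := a]) * Z t \<omega> (ix[m := b])) \<partial>M)"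
    using a b m by (simp add: Sigma_m_eq_mode_gram mat_expect_index mode_gram_index)
  also have "\<dots> = 1 / real (rho ps m) * (\<Sum>ix\<in>?T0. integral\<^sup>L M (\<lambda>\<omega>. Z t \<omega> (ix[m := a]) * Z t \<omega> (ix[m := b])))"
    using a b by (subst Bochner_Integration.integral_sum) (auto intro!: integrable_Z_mult tidx_update)
  also have "\<dots> = 1 / real (rho ps m) * (real (card ?T0) * (if a = b then 1 else 0))"
    using moment by simp
  also have "\<dots> = 1\<^sub>m (ps ! m) $$ (a, b)"
    using card_tidx_fibre[OF m, of 0] a b rho_pos by simp
  finally show "Sigma_m M ps m Z t 0 $$ (a, b) = 1\<^sub>m (ps ! m) $$ (a, b)" .
qed (simp_all add: Sigma_m_def)

end

locale rotated_tensor_series = L4_tensor_series +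
  fixes U :: "nat \<Rightarrow> real mat" and c :: real and Y :: "int \<Rightarrow> 'a \<Rightarrow> tensor"
  assumes orthogonal: "\<forall>m < length ps. U m \<in> carrier_mat (ps ! m) (ps ! m)
                   \<and> transpose_mat (U m) * U m = 1\<^sub>m (ps ! m)"
    and rotated: "\<forall>t. \<forall>\<omega> \<in> space M. \<forall>is \<in> tidx ps. Y t \<omega> is = c * mode_prods ps U (Z t \<omega>) is"
begin

lemma U_carrier: "m < length ps \<Longrightarrow> U m \<in> carrier_mat (ps ! m) (ps ! m)"
  using orthogonal by auto

lemma U_orthogonal: "m < length ps \<Longrightarrow> transpose_mat (U m) * U m = 1\<^sub>m (ps ! m)"
  using orthogonal by auto

lemma U_mult_transpose:
  assumes m: "m < length ps"
  shows "U m * transpose_mat (U m) = 1\<^sub>m (ps ! m)"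
proof -
  have "transpose_mat (U m) \<in> carrier_mat (ps ! m) (ps ! m)" using U_carrier[OF m] by simp
  then show ?thesis by (rule mat_mult_left_right_inverse[OF _ U_carrier[OF m] U_orthogonal[OF m]])
qed

lemma mode_gram_rotated:
  assumes m: "m < length ps" and \<omega>: "\<omega> \<in> space M"
  shows "mode_gram ps m (Y t \<omega>) (Y s \<omega>)
    = (c * c) \<cdot>\<^sub>m (U m * mode_gram ps m (Z t \<omega>) (Z s \<omega>) * transpose_mat (U m))"
proof -
  have "mode_gram ps m (Y t \<omega>) (Y s \<omega>)
      = mode_gram ps m (\<lambda>ix. c * mode_prods ps U (Z t \<omega>) ix) (\<lambda>ix. c * mode_prods ps U (Z s \<omega>) ix)"
    using rotated \<omega> by (intro mode_gram_cong) auto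
  also have "\<dots> = (c * c) \<cdot>\<^sub>m mode_gram ps m (mode_prods ps U (Z t \<omega>)) (mode_prods ps U (Z s \<omega>))"
    by (rule mode_gram_scale)
  finally show ?thesis by (simp only: mode_gram_mode_prods[OF m orthogonal])
qed

lemma Sigma_m_rotated:
  assumes m: "m < length ps"
  shows "transpose_mat (U m) * Sigma_m M ps m Y t \<tau> * U m = (c * c) \<cdot>\<^sub>m Sigma_m M ps m Z t \<tau>"
  unfolding Sigma_m_eq_mode_gram[OF m]
  by (rule orthogonal_conj_scaled_mat_expect[OF mat_integrable_mode_gram U_carrier[OF m] U_orthogonal[OF m]])
    (rule mode_gram_rotated[OF m])

lemma B_m_rotated:
  assumes m: "m < length ps"
  shows "transpose_mat (U m) * B_m M ps m Y t \<tau> * U m = ((c * c) * (c * c)) \<cdot>\<^sub>m B_m M ps m Z t \<tau>"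
  unfolding B_m_eq_mode_gram[OF m]
proof (rule orthogonal_conj_scaled_mat_expect[OF mat_integrable_mode_gram_mult U_carrier[OF m] U_orthogonal[OF m]])
  fix \<omega> assume \<omega>: "\<omega> \<in> space M"
  show "mode_gram ps m (Y t \<omega>) (Y (t + \<tau>) \<omega>) * mode_gram ps m (Y (t + \<tau>) \<omega>) (Y t \<omega>)
      = (c * c * (c * c)) \<cdot>\<^sub>m (U m * (mode_gram ps m (Z t \<omega>) (Z (t + \<tau>) \<omega>)
          * mode_gram ps m (Z (t + \<tau>) \<omega>) (Z t \<omega>)) * transpose_mat (U m))"
    unfolding mode_gram_rotated[OF m \<omega>]
    by (rule orthogonal_conj_mult[OF U_carrier[OF m] U_orthogonal[OF m] mode_gram_carrier mode_gram_carrier])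
qed

lemma B4_integrand_rotated:
  assumes m: "m < length ps" and i: "i < ps ! m" and j: "j < ps ! m" and \<omega>: "\<omega> \<in> space M"
  shows "mode_gram ps m (Y t1 \<omega>) (Y t2 \<omega>) $$ (i, j) \<cdot>\<^sub>m mode_gram ps m (Y t3 \<omega>) (Y t4 \<omega>)
    = (c * c * (c * c)) \<cdot>\<^sub>m (U m * ((\<Sum>k<ps ! m. \<Sum>l<ps ! m.
        U m $$ (i, k) * U m $$ (j, l) * mode_gram ps m (Z t1 \<omega>) (Z t2 \<omega>) $$ (k, l))
      \<cdot>\<^sub>m mode_gram ps m (Z t3 \<omega>) (Z t4 \<omega>)) * transpose_mat (U m))"
    (is "_ = _ \<cdot>\<^sub>m (U m * (?s \<cdot>\<^sub>m ?G2) * _)")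
proof -
  have Um: "U m \<in> carrier_mat (ps ! m) (ps ! m)" by (rule U_carrier[OF m])
  have "mode_gram ps m (Y t1 \<omega>) (Y t2 \<omega>) $$ (i, j) \<cdot>\<^sub>m mode_gram ps m (Y t3 \<omega>) (Y t4 \<omega>)
      = (c * c * ?s) \<cdot>\<^sub>m ((c * c) \<cdot>\<^sub>m (U m * ?G2 * transpose_mat (U m)))"
  proof -
    have "((c * c) \<cdot>\<^sub>m (U m * mode_gram ps m (Z t1 \<omega>) (Z t2 \<omega>) * transpose_mat (U m))) $$ (i, j)
        = c * c * ?s"
      using Um i j by (simp add: index_conj_transpose[OF Um mode_gram_carrier i j] del: index_mult_mat(1))
    then show ?thesis by (simp only: mode_gram_rotated[OF m \<omega>])
  qed
  also have "\<dots> = (c * c * (c * c)) \<cdot>\<^sub>m (?s \<cdot>\<^sub>m (U m * ?G2 * transpose_mat (U m)))"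
    by (simp add: smult_smult_mat mult_ac)
  also have "\<dots> = (c * c * (c * c)) \<cdot>\<^sub>m (U m * (?s \<cdot>\<^sub>m ?G2) * transpose_mat (U m))"
    using Um by (simp add: conj_smult_mat[of _ "ps ! m" "ps ! m" _ "ps ! m"])
  finally show ?thesis .
qed

lemma B4_m_rotated_index:
  assumes m: "m < length ps" and i: "i < ps ! m" and j: "j < ps ! m" and a: "a < ps ! m" and b: "b < ps ! m"
  shows "(transpose_mat (U m) * B4_m M ps m Y t \<alpha> \<beta> \<gamma> \<delta> i j * U m) $$ (a, b)
    = (c * c * (c * c)) * (\<Sum>k<ps ! m. \<Sum>l<ps ! m.
        U m $$ (i, k) * U m $$ (j, l) * B4_m M ps m Z t \<alpha> \<beta> \<gamma> \<delta> k l $$ (a, b))"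
proof -
  let ?p = "ps ! m" and ?r = "1 / real (rho ps m)" and ?k = "c * c * (c * c)"
  let ?G1 = "\<lambda>\<omega>. mode_gram ps m (Z (t + \<alpha>) \<omega>) (Z (t + \<beta>) \<omega>)"
  let ?G2 = "\<lambda>\<omega>. mode_gram ps m (Z (t + \<gamma>) \<omega>) (Z (t + \<delta>) \<omega>)"
  let ?w = "\<lambda>k l. U m $$ (i, k) * U m $$ (j, l)"
  let ?s = "\<lambda>\<omega>. \<Sum>k<?p. \<Sum>l<?p. ?w k l * ?G1 \<omega> $$ (k, l)"
  have "transpose_mat (U m) * B4_m M ps m Y t \<alpha> \<beta> \<gamma> \<delta> i j * U m
      = ?k \<cdot>\<^sub>m (?r \<cdot>\<^sub>m mat_expect M ?p ?p (\<lambda>\<omega>. ?s \<omega> \<cdot>\<^sub>m ?G2 \<omega>))"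
    unfolding B4_m_eq_mode_gram[OF m]
    by (rule orthogonal_conj_scaled_mat_expect[OF mat_integrable_weighted_mode_gram U_carrier[OF m]
          U_orthogonal[OF m]])
      (rule B4_integrand_rotated[OF m i j])
  then have "(transpose_mat (U m) * B4_m M ps m Y t \<alpha> \<beta> \<gamma> \<delta> i j * U m) $$ (a, b)
      = ?k * (?r * (\<integral>\<omega>. (\<Sum>k<?p. \<Sum>l<?p. ?w k l * (?G1 \<omega> $$ (k, l) * ?G2 \<omega> $$ (a, b))) \<partial>M))"
    using a b by (simp add: mat_expect_index sum_distrib_right mult.assoc)
  also have "\<dots> = ?k * (?r * (\<Sum>k<?p. \<Sum>l<?p. ?w k l * integral\<^sup>L M (\<lambda>\<omega>. ?G1 \<omega> $$ (k, l) * ?G2 \<omega> $$ (a, b))))"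
    using integrable_mode_gram_index_mult[OF _ _ a b] by (subst integral_double_sum) auto
  also have "\<dots> = ?k * (\<Sum>k<?p. \<Sum>l<?p. ?w k l * B4_m M ps m Z t \<alpha> \<beta> \<gamma> \<delta> k l $$ (a, b))"
    using a b by (simp add: B4_m_eq_mode_gram[OF m] mat_expect_index sum_distrib_left mult_ac)
  finally show ?thesis .
qed

end

locale rotated_white_tensor_series = rotated_tensor_series + white_tensor_series
begin

lemma Sigma_m_rotated_zero_lag:
  assumes m: "m < length ps"
  shows "Sigma_m M ps m Y t 0 = (c * c) \<cdot>\<^sub>m 1\<^sub>m (ps ! m)"
proof -
  have "Sigma_m M ps m Y t 0 = (c * c) \<cdot>\<^sub>m (U m * Sigma_m M ps m Z t 0 * transpose_mat (U m))"
    unfolding Sigma_m_eq_mode_gram[OF m]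
    by (rule scaled_mat_expect_conj[OF mat_integrable_mode_gram U_carrier[OF m]])
      (rule mode_gram_rotated[OF m])
  then show ?thesis
    using U_carrier[OF m] by (simp add: Sigma_m_zero_lag[OF m] U_mult_transpose[OF m])
qed

text \<open>Only the off-diagonal entries transform like those of a linear combination of the \<open>C\<^sub>k\<^sub>l\<close>:
  the identity term of \<open>E\<^sup>i\<^sup>j + E\<^sup>j\<^sup>i + I\<close> is invariant under conjugation, whereas the
  same combination of the identity terms of the \<open>C\<^sub>k\<^sub>l\<close> is \<open>\<delta>\<^sub>i\<^sub>j I\<close>.\<close>

lemma C_m_rotated_offdiag:
  assumes m: "m < length ps" and i: "i < ps ! m" and j: "j < ps ! m"
    and a: "a < ps ! m" and b: "b < ps ! m" and ab: "a \<noteq> b"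
  shows "(transpose_mat (U m) * C_m M ps m Y t \<tau> i j * U m) $$ (a, b)
    = (c * c * (c * c)) * (\<Sum>k<ps ! m. \<Sum>l<ps ! m.
        U m $$ (i, k) * U m $$ (j, l) * C_m M ps m Z t \<tau> k l $$ (a, b))"
proof -
  let ?p = "ps ! m" and ?k = "c * c * (c * c)"
  let ?w = "\<lambda>k l. U m $$ (i, k) * U m $$ (j, l)"
  let ?E = "\<lambda>k l. Eij ?p k l + Eij ?p l k + 1\<^sub>m ?p"
  let ?B1 = "\<lambda>W k l. B4_m M ps m W t 0 \<tau> \<tau> 0 k l"
  let ?B2 = "\<lambda>W k l. B4_m M ps m W t 0 \<tau> 0 \<tau> k l"
  let ?B3 = "\<lambda>W k l. B4_m M ps m W t \<tau> \<tau> 0 0 k l"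
  let ?S = "\<lambda>W k l. Sigma_m M ps m W t 0 * ?E k l * transpose_mat (Sigma_m M ps m W t 0)"
  let ?sum = "\<lambda>F. \<Sum>k<?p. \<Sum>l<?p. ?w k l * F k l"
  have Um: "U m \<in> carrier_mat ?p ?p" by (rule U_carrier[OF m])
  have E_carrier: "?E k l \<in> carrier_mat ?p ?p" for k l by simp
  have S_Y: "?S Y i j = ?k \<cdot>\<^sub>m ?E i j"
    using scalar_one_conj[OF E_carrier, of "c * c"] by (simp add: Sigma_m_rotated_zero_lag[OF m])
  have C_Z: "C_m M ps m Z t \<tau> k l $$ (a, b)
      = ?B1 Z k l $$ (a, b) + ?B2 Z k l $$ (a, b) - ?B3 Z k l $$ (a, b) - ?E k l $$ (a, b)" for k l
  proof -
    have "?S Z k l = ?E k l" using E_carrier[of k l] by (simp add: Sigma_m_zero_lag[OF m])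
    then show ?thesis using B4_m_carrier a b by (simp add: C_m_def del: Eij_index)
  qed
  have "(transpose_mat (U m) * C_m M ps m Y t \<tau> i j * U m) $$ (a, b)
      = (transpose_mat (U m) * ?B1 Y i j * U m) $$ (a, b) + (transpose_mat (U m) * ?B2 Y i j * U m) $$ (a, b)
        - (transpose_mat (U m) * ?B3 Y i j * U m) $$ (a, b)
        - (transpose_mat (U m) * (?k \<cdot>\<^sub>m ?E i j) * U m) $$ (a, b)"
    unfolding C_m_def S_Y
    by (rule conj_index_add_add_diff_diff[OF Um B4_m_carrier B4_m_carrier B4_m_carrier _ a b]) simp
  also have "(transpose_mat (U m) * (?k \<cdot>\<^sub>m ?E i j) * U m) $$ (a, b) = ?k * ?sum (\<lambda>k l. ?E k l $$ (a, b))"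
  proof -
    have "(transpose_mat (U m) * (?k \<cdot>\<^sub>m ?E i j) * U m) $$ (a, b)
        = ?k * (transpose_mat (U m) * ?E i j * U m) $$ (a, b)"
      using Um a b by (simp add: conj_smult_mat[of _ ?p ?p _ ?p])
    also have "\<dots> = ?k * (?w a b + ?w b a)"
      using orthogonal_conj_Eij_sym_one_offdiag[OF Um U_orthogonal[OF m] i j a b ab] by simp
    finally show ?thesis by (simp only: weighted_sum_Eij_sym_one_offdiag[OF a b ab])
  qed
  finally show ?thesis
    unfolding B4_m_rotated_index[OF m i j a b] C_Z
    by (simp only: right_diff_distrib distrib_left sum.distrib sum_subtractf)
qed

lemma diagonal_C_m_rotated:
  assumes m: "m < length ps" and i: "i < ps ! m" and j: "j < ps ! m"
    and diag: "\<forall>k < ps ! m. \<forall>l < ps ! m. diagonal_mat (C_m M ps m Z t \<tau> k l)"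
  shows "diagonal_mat (transpose_mat (U m) * C_m M ps m Y t \<tau> i j * U m)"
  unfolding diagonal_mat_def
proof (intro allI impI)
  fix a b assume "a < dim_row (transpose_mat (U m) * C_m M ps m Y t \<tau> i j * U m)"
    and "b < dim_col (transpose_mat (U m) * C_m M ps m Y t \<tau> i j * U m)" and ab: "a \<noteq> b"
  then have a: "a < ps ! m" and b: "b < ps ! m" using U_carrier[OF m] by auto
  have "C_m M ps m Z t \<tau> k l $$ (a, b) = 0" if "k < ps ! m" "l < ps ! m" for k l
    using diag that a b ab C_m_carrier[of M ps m Z t \<tau> k l] unfolding diagonal_mat_def by auto
  then show "(transpose_mat (U m) * C_m M ps m Y t \<tau> i j * U m) $$ (a, b) = 0"
    by (simp add: C_m_rotated_offdiag[OF m i j a b ab])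
qed

end

theorem theorem2:
  fixes M :: "'a measure" and ps :: "nat list" and Z :: "int \<Rightarrow> 'a \<Rightarrow> tensor"
    and \<Omega> U :: "nat \<Rightarrow> real mat" and c :: real and Tau :: "int set"
    and X Xst :: "int \<Rightarrow> 'a \<Rightarrow> tensor"
  assumes P: "prob_space M"
    and r_pos: "length ps \<ge> 1"
    and p_pos: "\<forall>k < length ps. ps ! k \<ge> 1"
    and Z_meas: "\<forall>t. \<forall>is \<in> tidx ps. (\<lambda>\<omega>. Z t \<omega> is) \<in> borel_measurable M"
    and Z_4mom: "\<forall>t. \<forall>is \<in> tidx ps. integrable M (\<lambda>\<omega>. (Z t \<omega> is) ^ 4)"
    and Z_mean: "\<forall>t. \<forall>is \<in> tidx ps. integral\<^sup>L M (\<lambda>\<omega>. Z t \<omega> is) = 0"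
    and Z_cov: "\<forall>t. \<forall>is \<in> tidx ps. \<forall>js \<in> tidx ps.
        integral\<^sup>L M (\<lambda>\<omega>. (Z t \<omega> is - integral\<^sup>L M (\<lambda>\<omega>'. Z t \<omega>' is))
                         * (Z t \<omega> js - integral\<^sup>L M (\<lambda>\<omega>'. Z t \<omega>' js)))
        = (if is = js then 1 else 0)"
    and Omega: "\<forall>m < length ps. \<Omega> m \<in> carrier_mat (ps ! m) (ps ! m) \<and> invertible_mat (\<Omega> m)"
    and X_def: "X = (\<lambda>t \<omega>. mode_prods ps \<Omega> (Z t \<omega>))"
    and Xst_def: "Xst = (\<lambda>t \<omega>. mode_prods ps (\<lambda>m. inv_sqrt_mat (Sigma_m M ps m X t 0)) (X t \<omega>))"
    and c_pos: "c > 0"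
    and U_orth: "\<forall>m < length ps. U m \<in> carrier_mat (ps ! m) (ps ! m)
                   \<and> transpose_mat (U m) * U m = 1\<^sub>m (ps ! m)"
    and Xst_eq: "\<forall>t. \<forall>\<omega> \<in> space M. \<forall>is \<in> tidx ps.
                   Xst t \<omega> is = c * mode_prods ps U (Z t \<omega>) is"
  shows
    "((\<forall>m < length ps. \<forall>\<tau> \<in> Tau. \<forall>t. diagonal_mat (Sigma_m M ps m Z t \<tau>))
        \<longrightarrow> (\<forall>m < length ps. \<forall>\<tau> \<in> Tau. \<forall>t.
              diagonal_mat (transpose_mat (U m) * Sigma_m M ps m Xst t \<tau> * U m)))
   \<and> ((\<forall>m < length ps. \<forall>\<tau> \<in> Tau. \<forall>t. diagonal_mat (B_m M ps m Z t \<tau>))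
        \<longrightarrow> (\<forall>m < length ps. \<forall>\<tau> \<in> Tau. \<forall>t.
              diagonal_mat (transpose_mat (U m) * B_m M ps m Xst t \<tau> * U m)))
   \<and> ((\<forall>m < length ps. \<forall>i < ps ! m. \<forall>j < ps ! m. \<forall>\<tau> \<in> Tau. \<forall>t.
          diagonal_mat (C_m M ps m Z t \<tau> i j))
        \<longrightarrow> (\<forall>m < length ps. \<forall>i < ps ! m. \<forall>j < ps ! m. \<forall>\<tau> \<in> Tau. \<forall>t.
              diagonal_mat (transpose_mat (U m) * C_m M ps m Xst t \<tau> i j * U m)))"
proof -
  \<comment> \<open>\<open>Xst\<close> enters only through \<open>Xst_eq\<close>; the hypotheses on \<open>\<Omega>\<close>, \<open>X\<close> and \<open>c\<close>
    merely guarantee that such a representation exists.\<close>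
  interpret rotated_white_tensor_series M ps Z U c Xst
    unfolding rotated_white_tensor_series_def rotated_tensor_series_def rotated_tensor_series_axioms_def
      white_tensor_series_def white_tensor_series_axioms_def L4_tensor_series_def
    using P Z_meas Z_4mom U_orth Xst_eq p_pos Z_mean Z_cov by blast
  show ?thesis
    by (auto simp: Sigma_m_rotated B_m_rotated intro!: diagonal_mat_smult diagonal_C_m_rotated)
qed

end
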